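(* Let $G$ be a graph, let $F(G)$ be the union of all tree components of $G$ and $cmp(F(G))$ the number of tree components of $G$, and let $k\ge1$. The following are equivalent: (a1) $M_k(G)$ has at least one circuit; (a2) $k\le \Delta G+cmp(F(G))$; (a3) $M_k(G)$ is a non-trivial matroid.
   Context: Graphs are finite, may have loops and parallel edges, and have no isolated vertices. $\Delta G=|E(G)|-|V(G)|$. For $X\subseteq E(G)$, $G\langle X\rangle$ is the subgraph with edge set $X$ and vertex set the vertices incident to $X$. For $k\ge0$, the $k$-circular matroid $M_k(G)$ is the matroid on $E(G)$ whose circuits are the inclusion-minimal members of $\{C\subseteq E(G):C\neq\emptyset,\ |C|=|V(G\langle C\rangle)|+k\}$. A matroid on $E$ is trivial if $E$ is a base or $E$ is a cobase (i.e. $E\setminus\emptyset$ complement of a base is $E$), and non-trivial otherwise; equivalently, non-trivial means it has at least one circuit and at least one cocircuit. *)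

theory Defs
  imports Main
begin

text \<open>A graph (loops and parallel edges allowed, no isolated vertices) is given by a
finite edge set E and an incidence map inc assigning to each edge its set of
one (loop) or two end-vertices. The vertex set is the set of vertices incident to edges.\<close>

definition graph :: "'e set \<Rightarrow> ('e \<Rightarrow> 'v set) \<Rightarrow> bool" where
  "graph E inc \<longleftrightarrow> finite E \<and> (\<forall>e\<in>E. card (inc e) = 1 \<or> card (inc e) = 2)"

definition verts :: "('e \<Rightarrow> 'v set) \<Rightarrow> 'e set \<Rightarrow> 'v set" where
  "verts inc X = \<Union> (inc ` X)"

definition adj :: "('e \<Rightarrow> 'v set) \<Rightarrow> 'e set \<Rightarrow> ('v \<times> 'v) set" where
  "adj inc X = {(u, w). \<exists>e\<in>X. u \<in> inc e \<and> w \<in> inc e}"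

definition connected_edges :: "('e \<Rightarrow> 'v set) \<Rightarrow> 'e set \<Rightarrow> bool" where
  "connected_edges inc X \<longleftrightarrow> X \<noteq> {} \<and>
     (\<forall>u\<in>verts inc X. \<forall>w\<in>verts inc X. (u, w) \<in> (adj inc X)\<^sup>*)"

definition deg :: "('e \<Rightarrow> 'v set) \<Rightarrow> 'e set \<Rightarrow> 'v \<Rightarrow> nat" where
  "deg inc X v = (\<Sum>e\<in>{e\<in>X. v \<in> inc e}. if card (inc e) = 1 then 2 else 1)"

definition is_cycle :: "('e \<Rightarrow> 'v set) \<Rightarrow> 'e set \<Rightarrow> bool" where
  "is_cycle inc X \<longleftrightarrow> connected_edges inc X \<and> (\<forall>v\<in>verts inc X. deg inc X v = 2)"

text \<open>Components of G, given by their edge sets (G has no isolated vertices).\<close>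
definition components :: "'e set \<Rightarrow> ('e \<Rightarrow> 'v set) \<Rightarrow> 'e set set" where
  "components E inc =
     (\<lambda>v. {e\<in>E. inc e \<subseteq> (adj inc E)\<^sup>* `` {v}}) ` verts inc E"

definition is_tree :: "('e \<Rightarrow> 'v set) \<Rightarrow> 'e set \<Rightarrow> bool" where
  "is_tree inc X \<longleftrightarrow> connected_edges inc X \<and> (\<nexists>Y. Y \<subseteq> X \<and> is_cycle inc Y)"

definition tree_components :: "'e set \<Rightarrow> ('e \<Rightarrow> 'v set) \<Rightarrow> 'e set set" where
  "tree_components E inc = {X \<in> components E inc. is_tree inc X}"

definition Delta :: "'e set \<Rightarrow> ('e \<Rightarrow> 'v set) \<Rightarrow> int" where
  "Delta E inc = int (card E) - int (card (verts inc E))"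

definition kc_family :: "nat \<Rightarrow> 'e set \<Rightarrow> ('e \<Rightarrow> 'v set) \<Rightarrow> 'e set set" where
  "kc_family k E inc = {C. C \<subseteq> E \<and> C \<noteq> {} \<and> card C = card (verts inc C) + k}"

definition kc_circuit :: "nat \<Rightarrow> 'e set \<Rightarrow> ('e \<Rightarrow> 'v set) \<Rightarrow> 'e set \<Rightarrow> bool" where
  "kc_circuit k E inc C \<longleftrightarrow> C \<in> kc_family k E inc \<and>
     (\<forall>D \<in> kc_family k E inc. D \<subseteq> C \<longrightarrow> D = C)"

definition kc_indep :: "nat \<Rightarrow> 'e set \<Rightarrow> ('e \<Rightarrow> 'v set) \<Rightarrow> 'e set \<Rightarrow> bool" where
  "kc_indep k E inc I \<longleftrightarrow> I \<subseteq> E \<and> (\<nexists>C. kc_circuit k E inc C \<and> C \<subseteq> I)"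

definition kc_base :: "nat \<Rightarrow> 'e set \<Rightarrow> ('e \<Rightarrow> 'v set) \<Rightarrow> 'e set \<Rightarrow> bool" where
  "kc_base k E inc B \<longleftrightarrow> kc_indep k E inc B \<and>
     (\<forall>I. kc_indep k E inc I \<longrightarrow> B \<subseteq> I \<longrightarrow> I = B)"

definition kc_cobase :: "nat \<Rightarrow> 'e set \<Rightarrow> ('e \<Rightarrow> 'v set) \<Rightarrow> 'e set \<Rightarrow> bool" where
  "kc_cobase k E inc X \<longleftrightarrow> (\<exists>B. kc_base k E inc B \<and> X = E - B)"

definition kc_trivial :: "nat \<Rightarrow> 'e set \<Rightarrow> ('e \<Rightarrow> 'v set) \<Rightarrow> bool" where
  "kc_trivial k E inc \<longleftrightarrow> kc_base k E inc E \<or> kc_cobase k E inc E"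

end

theory Submission
  imports Defs
begin

text \<open>Call \<open>|C| - |V(G\<langle>C\<rangle>)|\<close> the excess of an edge set \<open>C\<close>, so that the candidate circuits of
\<open>M\<^sub>k(G)\<close> are the nonempty sets of excess \<open>k\<close>. Within a connected graph \<open>X\<close> every nonempty edge
set has excess at most that of \<open>X\<close> (grow it edge by edge, each new edge touching the part built
so far), and \<open>X\<close> itself has excess \<open>-1\<close> if it is a tree and \<open>\<ge> 0\<close> otherwise, since a minimal
edge set of nonnegative excess is a cycle. Excess is additive over components, so the largest
excess of an edge set of \<open>G\<close> is the sum of the nonnegative excesses of its components, which is
\<open>\<Delta>G + cmp(F(G))\<close>. Deleting an edge lowers the excess by at most one, so every \<open>k \<ge> 1\<close> below this
maximum is attained. Finally a circuit makes \<open>E\<close> dependent, and for \<open>k \<ge> 1\<close> every single edge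
is independent, so \<open>E\<close> is not a cobase either.\<close>

lemma graph_subset: "graph E inc \<Longrightarrow> C \<subseteq> E \<Longrightarrow> graph C inc"
  unfolding graph_def by (auto intro: finite_subset)

lemma graph_finite: "graph E inc \<Longrightarrow> finite E"
  unfolding graph_def by auto

lemma graph_edge:
  assumes "graph E inc" "e \<in> E"
  shows "finite (inc e)" "inc e \<noteq> {}" "card (inc e) \<le> 2" "card (inc e) \<ge> 1"
proof -
  have c: "card (inc e) = 1 \<or> card (inc e) = 2"
    using assms unfolding graph_def by blast
  then show "finite (inc e)"
    by (metis card.infinite zero_neq_numeral zero_neq_one)
  show "inc e \<noteq> {}" "card (inc e) \<le> 2" "card (inc e) \<ge> 1"
    using c by auto
qed

lemma verts_simps [simp]:
  "verts inc {} = {}"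
  "verts inc (insert e A) = inc e \<union> verts inc A"
  "verts inc (A \<union> B) = verts inc A \<union> verts inc B"
  by (auto simp: verts_def)

lemma verts_mono: "A \<subseteq> B \<Longrightarrow> verts inc A \<subseteq> verts inc B"
  by (auto simp: verts_def)

lemma finite_verts: "graph E inc \<Longrightarrow> finite (verts inc E)"
  unfolding verts_def by (metis finite_UN_I graph_finite graph_edge(1))

lemma disjoint_if_verts_disjoint:
  assumes "graph E inc" "X \<subseteq> E" "verts inc X \<inter> verts inc Y = {}"
  shows "X \<inter> Y = {}"
  using assms graph_edge(2) unfolding verts_def by fastforce

subsection \<open>Excess of edge sets\<close>

definition excess :: "('e \<Rightarrow> 'v set) \<Rightarrow> 'e set \<Rightarrow> int" where
  "excess inc C = int (card C) - int (card (verts inc C))"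

lemma excess_empty [simp]: "excess inc {} = 0"
  by (simp add: excess_def verts_def)

lemma Delta_eq_excess: "Delta E inc = excess inc E"
  by (simp add: Delta_def excess_def)

lemma excess_Diff_singleton_ge:
  assumes g: "graph C inc" and e: "e \<in> C"
  shows "excess inc C - 1 \<le> excess inc (C - {e})"
proof -
  have "card (verts inc (C - {e})) \<le> card (verts inc C)"
    by (rule card_mono[OF finite_verts[OF g] verts_mono]) auto
  moreover have "card (C - {e}) = card C - 1" "card C \<ge> 1"
    using e graph_finite[OF g] by (auto simp: Suc_le_eq card_gt_0_iff)
  ultimately show ?thesis
    unfolding excess_def by linarith
qed

lemma excess_Diff_pendant_edge:
  assumes g: "graph Z inc" and pendant: "{e\<in>Z. v \<in> inc e} = {e}"
  shows "excess inc Z \<le> excess inc (Z - {e})"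
proof -
  have e: "e \<in> Z" "v \<in> inc e"
    using pendant by auto
  then have v: "v \<in> verts inc Z"
    by (auto simp: verts_def)
  have "verts inc (Z - {e}) \<subseteq> verts inc Z - {v}"
  proof
    fix x assume "x \<in> verts inc (Z - {e})"
    then obtain e' where e': "e' \<in> Z" "e' \<noteq> e" "x \<in> inc e'"
      by (auto simp: verts_def)
    then have "v \<notin> inc e'"
      using pendant by blast
    with e' show "x \<in> verts inc Z - {v}"
      by (auto simp: verts_def)
  qed
  then have "card (verts inc (Z - {e})) \<le> card (verts inc Z - {v})"
    by (rule card_mono[rotated]) (simp add: finite_verts[OF g])
  moreover have "card (verts inc Z - {v}) = card (verts inc Z) - 1"
    using v by simp
  moreover have "card (Z - {e}) = card Z - 1"
    using e(1) by simp
  moreover have "card Z \<ge> 1" "card (verts inc Z) \<ge> 1"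
    using e(1) v graph_finite[OF g] finite_verts[OF g] by (auto simp: Suc_le_eq card_gt_0_iff)
  ultimately show ?thesis
    unfolding excess_def by linarith
qed

lemma exists_subset_excess_eq:
  assumes "graph C inc" "int k \<le> excess inc C" "k \<ge> 1"
  shows "\<exists>D\<subseteq>C. D \<noteq> {} \<and> excess inc D = int k"
  using assms
proof (induction "card C" arbitrary: C rule: less_induct)
  case less
  then have "C \<noteq> {}"
    by auto
  show ?case
  proof (cases "excess inc C = int k")
    case True
    with \<open>C \<noteq> {}\<close> show ?thesis
      by blast
  next
    case False
    obtain e where e: "e \<in> C"
      using \<open>C \<noteq> {}\<close> by blast
    have "int k \<le> excess inc (C - {e})"
      using excess_Diff_singleton_ge[OF less.prems(1) e] less.prems(2) False by linarith
    moreover have "card (C - {e}) < card C"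
      using card_Diff1_less[OF graph_finite[OF less.prems(1)] e] .
    ultimately obtain D where "D \<subseteq> C - {e}" "D \<noteq> {}" "excess inc D = int k"
      using less.hyps[of "C - {e}"] graph_subset[OF less.prems(1), of "C - {e}"] less.prems(3)
      by blast
    then show ?thesis
      by blast
  qed
qed

lemma sum_deg_eq_twice_card:
  assumes g: "graph Y inc"
  shows "(\<Sum>v\<in>verts inc Y. deg inc Y v) = 2 * card Y"
proof -
  have "(\<Sum>v\<in>verts inc Y. deg inc Y v)
      = (\<Sum>e\<in>Y. \<Sum>v\<in>{v. v \<in> verts inc Y \<and> v \<in> inc e}. if card (inc e) = 1 then 2 else 1::nat)"
    unfolding deg_def by (rule sum.swap_restrict[OF finite_verts[OF g] graph_finite[OF g]])
  also have "\<dots> = (\<Sum>e\<in>Y. 2::nat)"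
  proof (rule sum.cong[OF refl])
    fix e assume e: "e \<in> Y"
    then have "{v. v \<in> verts inc Y \<and> v \<in> inc e} = inc e"
      by (auto simp: verts_def)
    moreover have "card (inc e) = 1 \<or> card (inc e) = 2"
      using g e by (auto simp: graph_def)
    ultimately show "(\<Sum>v\<in>{v. v \<in> verts inc Y \<and> v \<in> inc e}. if card (inc e) = 1 then 2 else 1::nat) = 2"
      by auto
  qed
  finally show ?thesis
    by simp
qed

lemma excess_cycle:
  assumes "graph Y inc" "is_cycle inc Y"
  shows "excess inc Y = 0"
proof -
  have "(\<Sum>v\<in>verts inc Y. deg inc Y v) = (\<Sum>v\<in>verts inc Y. 2)"
    using assms(2) by (auto simp: is_cycle_def)
  then show ?thesis
    using sum_deg_eq_twice_card[OF assms(1)] by (simp add: excess_def)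
qed

lemma adj_edge: "e \<in> X \<Longrightarrow> x \<in> inc e \<Longrightarrow> y \<in> inc e \<Longrightarrow> (x, y) \<in> adj inc X"
  by (auto simp: adj_def)

lemma adj_rtrancl_sym: "(x, y) \<in> (adj inc X)\<^sup>* \<Longrightarrow> (y, x) \<in> (adj inc X)\<^sup>*"
proof -
  have "(adj inc X)\<inverse> = adj inc X"
    by (auto simp: adj_def)
  then show "(x, y) \<in> (adj inc X)\<^sup>* \<Longrightarrow> (y, x) \<in> (adj inc X)\<^sup>*"
    by (metis rtrancl_converseI)
qed

lemma connected_edges_ex_touching:
  assumes g: "graph X inc" and conn: "connected_edges inc X"
    and C: "C \<subseteq> X" "C \<noteq> {}" "X - C \<noteq> {}"
  shows "\<exists>e\<in>X - C. inc e \<inter> verts inc C \<noteq> {}"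
proof (rule ccontr)
  assume "\<not> ?thesis"
  then have apart: "\<And>e. e \<in> X - C \<Longrightarrow> inc e \<inter> verts inc C = {}"
    by blast
  obtain e0 w where e0: "e0 \<in> X - C" "w \<in> inc e0"
    using C(3) graph_edge(2)[OF g] by blast
  obtain c u where u: "c \<in> C" "u \<in> inc c"
    using C(1,2) graph_edge(2)[OF g] by blast
  have "(u, w) \<in> (adj inc X)\<^sup>*"
    using conn u e0 C(1) by (auto simp: connected_edges_def verts_def)
  then have "w \<in> verts inc C"
  proof (induction rule: rtrancl_induct)
    case base
    show ?case
      using u by (auto simp: verts_def)
  next
    case (step y z)
    then obtain e where "e \<in> X" "y \<in> inc e" "z \<in> inc e"
      by (auto simp: adj_def)
    with step.IH apart show ?case
      by (cases "e \<in> C") (auto simp: verts_def)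
  qed
  then show False
    using apart[OF e0(1)] e0(2) by blast
qed

lemma excess_le_connected:
  assumes g: "graph X inc" and conn: "connected_edges inc X" and "C \<subseteq> X" "C \<noteq> {}"
  shows "excess inc C \<le> excess inc X"
  using assms(3,4)
proof (induction "card (X - C)" arbitrary: C rule: less_induct)
  case less
  show ?case
  proof (cases "X - C = {}")
    case True
    then show ?thesis
      using less.prems(1) by (simp add: Diff_eq_empty_iff subset_antisym)
  next
    case False
    obtain e where e: "e \<in> X - C" "inc e \<inter> verts inc C \<noteq> {}"
      using connected_edges_ex_touching[OF g conn less.prems False] by blast
    have finX: "finite X"
      using graph_finite[OF g] .
    have "card (X - insert e C) < card (X - C)"
      using e(1) finX by (metis Diff_insert card_Diff1_less finite_Diff)
    then have IH: "excess inc (insert e C) \<le> excess inc X"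
      using less.hyps less.prems e(1) by blast
    have card_insert: "card (insert e C) = card C + 1"
      using e(1) finite_subset[OF less.prems(1) finX] by simp
    \<comment> \<open>the new edge shares an end with \<open>C\<close>, so it adds at most one new vertex\<close>
    have "card (inc e - verts inc C) < card (inc e)"
      using e(2) graph_edge(1)[OF g] e(1) by (intro psubset_card_mono) blast+
    then have "card (inc e - verts inc C) \<le> 1"
      using graph_edge(3)[OF g] e(1) by fastforce
    moreover have "verts inc (insert e C) = (inc e - verts inc C) \<union> verts inc C"
      by auto
    ultimately have "card (verts inc (insert e C)) \<le> card (verts inc C) + 1"
      using card_Un_le[of "inc e - verts inc C" "verts inc C"] by simp
    then show ?thesis
      using IH card_insert unfolding excess_def by linarith
  qed
qed
subsection \<open>Components\<close>

lemma edge_subset_reach: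
  assumes "e \<in> E" "x \<in> inc e"
  shows "inc e \<subseteq> (adj inc E)\<^sup>* `` {x}"
  using assms adj_edge[of e E x inc] by blast

lemma reach_within_component:
  assumes "(v, a) \<in> (adj inc E)\<^sup>*"
  shows "(v, a) \<in> (adj inc {e\<in>E. inc e \<subseteq> (adj inc E)\<^sup>* `` {v}})\<^sup>*"
  using assms
proof (induction rule: rtrancl_induct)
  case base
  show ?case
    by simp
next
  case (step y z)
  then obtain e where e: "e \<in> E" "y \<in> inc e" "z \<in> inc e"
    by (auto simp: adj_def)
  have "inc e \<subseteq> (adj inc E)\<^sup>* `` {v}"
  proof
    fix t assume "t \<in> inc e"
    then have "(y, t) \<in> adj inc E"
      using adj_edge e by metis
    then show "t \<in> (adj inc E)\<^sup>* `` {v}"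
      using step.hyps(1) by (auto intro: rtrancl_into_rtrancl)
  qed
  with e have "(y, z) \<in> adj inc {e\<in>E. inc e \<subseteq> (adj inc E)\<^sup>* `` {v}}"
    by (auto simp: adj_def)
  then show ?case
    by (rule rtrancl_into_rtrancl[OF step.IH])
qed

lemma components_subset: "X \<in> components E inc \<Longrightarrow> X \<subseteq> E"
  unfolding components_def by auto

lemma components_nonempty:
  assumes "X \<in> components E inc"
  shows "X \<noteq> {}"
proof -
  obtain v where "v \<in> verts inc E" and X: "X = {e\<in>E. inc e \<subseteq> (adj inc E)\<^sup>* `` {v}}"
    using assms unfolding components_def by blast
  then obtain e where "e \<in> E" "v \<in> inc e"
    unfolding verts_def by blast
  then have "e \<in> X"
    unfolding X using edge_subset_reach[of e E v inc] by blast
  then show ?thesis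
    by blast
qed

lemma connected_components:
  assumes X: "X \<in> components E inc"
  shows "connected_edges inc X"
proof -
  obtain v where X_eq: "X = {e\<in>E. inc e \<subseteq> (adj inc E)\<^sup>* `` {v}}"
    using X unfolding components_def by blast
  have "(a, b) \<in> (adj inc X)\<^sup>*" if "a \<in> verts inc X" "b \<in> verts inc X" for a b
  proof -
    have "(v, a) \<in> (adj inc X)\<^sup>*" "(v, b) \<in> (adj inc X)\<^sup>*"
      using that reach_within_component[of v _ inc E] unfolding X_eq verts_def by blast+
    then show ?thesis
      by (metis adj_rtrancl_sym rtrancl_trans)
  qed
  then show ?thesis
    unfolding connected_edges_def using components_nonempty[OF X] by blast
qed

lemma verts_components_disjoint:
  assumes "X \<in> components E inc" "Y \<in> components E inc" "X \<noteq> Y"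
  shows "verts inc X \<inter> verts inc Y = {}"
proof (rule ccontr)
  let ?R = "(adj inc E)\<^sup>*"
  assume "verts inc X \<inter> verts inc Y \<noteq> {}"
  moreover obtain v w where X: "X = {e\<in>E. inc e \<subseteq> ?R `` {v}}" and Y: "Y = {e\<in>E. inc e \<subseteq> ?R `` {w}}"
    using assms(1,2) unfolding components_def by blast
  ultimately obtain t where "(v, t) \<in> ?R" "(w, t) \<in> ?R"
    unfolding verts_def by blast
  then have vw: "(v, w) \<in> ?R"
    using adj_rtrancl_sym rtrancl_trans by metis
  then have "(w, v) \<in> ?R"
    by (rule adj_rtrancl_sym)
  with vw have "?R `` {v} = ?R `` {w}"
    using rtrancl_trans[of v w] rtrancl_trans[of w v] by blast
  then show False
    using assms(3) X Y by simp
qed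

lemma Union_components:
  assumes g: "graph E inc"
  shows "\<Union> (components E inc) = E"
proof
  show "\<Union> (components E inc) \<subseteq> E"
    using components_subset by blast
  show "E \<subseteq> \<Union> (components E inc)"
  proof
    fix e assume e: "e \<in> E"
    then obtain x where x: "x \<in> inc e"
      using graph_edge(2)[OF g] by blast
    then have "e \<in> {e'\<in>E. inc e' \<subseteq> (adj inc E)\<^sup>* `` {x}}"
      using edge_subset_reach[of e E x inc] e x by blast
    moreover have "x \<in> verts inc E"
      using e x by (auto simp: verts_def)
    ultimately show "e \<in> \<Union> (components E inc)"
      unfolding components_def by blast
  qed
qed

lemma finite_components: "graph E inc \<Longrightarrow> finite (components E inc)"
  unfolding components_def using finite_verts by blast

lemma excess_partition:
  assumes g: "graph E inc" and P: "finite P" "\<And>X. X \<in> P \<Longrightarrow> X \<subseteq> E"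
    and disj: "\<And>X Y. X \<in> P \<Longrightarrow> Y \<in> P \<Longrightarrow> X \<noteq> Y \<Longrightarrow> verts inc X \<inter> verts inc Y = {}"
    and C: "C \<subseteq> \<Union>P"
  shows "excess inc C = (\<Sum>X\<in>P. excess inc (C \<inter> X))"
proof -
  have gCX: "graph (C \<inter> X) inc" if "X \<in> P" for X
    using graph_subset[OF g] P(2)[OF that] by blast
  have disjCX: "verts inc (C \<inter> X) \<inter> verts inc (C \<inter> Y) = {}"
    if "X \<in> P" "Y \<in> P" "X \<noteq> Y" for X Y
    using disj[OF that] verts_mono[of "C \<inter> X" X inc] verts_mono[of "C \<inter> Y" Y inc] by blast
  have C_eq: "C = (\<Union>X\<in>P. C \<inter> X)"
    using C by blast
  have "card C = (\<Sum>X\<in>P. card (C \<inter> X))"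
  proof (subst C_eq, rule card_UN_disjoint[OF P(1)])
    show "\<forall>X\<in>P. finite (C \<inter> X)"
      using gCX graph_finite by blast
    show "\<forall>X\<in>P. \<forall>Y\<in>P. X \<noteq> Y \<longrightarrow> C \<inter> X \<inter> (C \<inter> Y) = {}"
    proof (intro ballI impI)
      fix X Y assume XY: "X \<in> P" "Y \<in> P" "X \<noteq> Y"
      show "C \<inter> X \<inter> (C \<inter> Y) = {}"
        using disjoint_if_verts_disjoint[OF gCX[OF XY(1)] subset_refl disjCX[OF XY]] by blast
    qed
  qed
  moreover have "card (verts inc C) = (\<Sum>X\<in>P. card (verts inc (C \<inter> X)))"
  proof -
    have "verts inc C = (\<Union>X\<in>P. verts inc (C \<inter> X))"
      by (subst C_eq) (auto simp: verts_def)
    also have "card \<dots> = (\<Sum>X\<in>P. card (verts inc (C \<inter> X)))"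
    proof (rule card_UN_disjoint[OF P(1)])
      show "\<forall>X\<in>P. finite (verts inc (C \<inter> X))"
        using gCX finite_verts by blast
      show "\<forall>X\<in>P. \<forall>Y\<in>P. X \<noteq> Y \<longrightarrow> verts inc (C \<inter> X) \<inter> verts inc (C \<inter> Y) = {}"
        using disjCX by blast
    qed
    finally show ?thesis .
  qed
  ultimately show ?thesis
    unfolding excess_def by (simp add: of_nat_sum sum_subtractf)
qed

lemma excess_sum_components:
  assumes "graph E inc" "C \<subseteq> E"
  shows "excess inc C = (\<Sum>X\<in>components E inc. excess inc (C \<inter> X))"
proof -
  have "C \<subseteq> \<Union> (components E inc)"
    using assms Union_components by blast
  then show ?thesis
    using excess_partition[OF assms(1) finite_components[OF assms(1)]]
      components_subset verts_components_disjoint by metis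
qed
subsection \<open>Cycles and trees\<close>

definition minimal_nonneg_excess :: "('e \<Rightarrow> 'v set) \<Rightarrow> 'e set \<Rightarrow> bool" where
  "minimal_nonneg_excess inc Z \<longleftrightarrow> Z \<noteq> {} \<and> excess inc Z \<ge> 0 \<and>
     (\<forall>W. W \<subseteq> Z \<longrightarrow> W \<noteq> {} \<longrightarrow> excess inc W \<ge> 0 \<longrightarrow> W = Z)"

lemma minimal_nonneg_excessD:
  assumes "minimal_nonneg_excess inc Z"
  shows "Z \<noteq> {}" "excess inc Z \<ge> 0"
    and "W \<subseteq> Z \<Longrightarrow> W \<noteq> {} \<Longrightarrow> excess inc W \<ge> 0 \<Longrightarrow> W = Z"
  using assms unfolding minimal_nonneg_excess_def by blast+

lemma ex_minimal_nonneg_excess: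
  assumes "finite Y" "Y \<noteq> {}" "excess inc Y \<ge> 0"
  shows "\<exists>Z\<subseteq>Y. minimal_nonneg_excess inc Z"
proof -
  let ?P = "\<lambda>Z. Z \<subseteq> Y \<and> Z \<noteq> {} \<and> excess inc Z \<ge> 0"
  obtain Z where Z: "?P Z" and least: "\<And>W. ?P W \<Longrightarrow> card Z \<le> card W"
    using ex_has_least_nat[of ?P Y card] assms by blast
  have "W = Z" if "W \<subseteq> Z" "W \<noteq> {}" "excess inc W \<ge> 0" for W
    using card_seteq[OF finite_subset[OF _ assms(1)] that(1)] least[of W] Z that by blast
  with Z show ?thesis
    unfolding minimal_nonneg_excess_def by blast
qed

lemma excess_minimal_eq_0:
  assumes g: "graph Z inc" and min: "minimal_nonneg_excess inc Z"
  shows "excess inc Z = 0"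
proof (rule ccontr)
  assume "excess inc Z \<noteq> 0"
  then have pos: "excess inc Z \<ge> 1"
    using minimal_nonneg_excessD(2)[OF min] by linarith
  obtain e where e: "e \<in> Z"
    using minimal_nonneg_excessD(1)[OF min] by blast
  have "excess inc {e} = 1 - int (card (inc e))"
    by (simp add: excess_def)
  then have "Z \<noteq> {e}"
    using pos graph_edge(4)[OF g e] by auto
  moreover have "excess inc (Z - {e}) \<ge> 0"
    using excess_Diff_singleton_ge[OF g e] pos by linarith
  ultimately have "Z - {e} = Z"
    using minimal_nonneg_excessD(3)[OF min, of "Z - {e}"] by blast
  then show False
    using e by blast
qed

lemma deg_minimal_ge_2:
  assumes g: "graph Z inc" and min: "minimal_nonneg_excess inc Z" and v: "v \<in> verts inc Z"
  shows "deg inc Z v \<ge> 2"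
proof (rule ccontr)
  assume low: "\<not> deg inc Z v \<ge> 2"
  define S where "S = {e\<in>Z. v \<in> inc e}"
  have "finite S"
    using graph_finite[OF g] unfolding S_def by simp
  moreover have "S \<noteq> {}"
    using v unfolding S_def verts_def by blast
  ultimately have "card S > 0"
    by (simp add: card_gt_0_iff)
  moreover have "card S \<le> deg inc Z v"
    unfolding deg_def S_def[symmetric] card_eq_sum by (rule sum_mono) auto
  ultimately have "card S = 1"
    using low by linarith
  then obtain e where S_eq: "S = {e}"
    by (rule card_1_singletonE)
  then have e: "e \<in> Z" "v \<in> inc e"
    unfolding S_def by auto
  have "deg inc Z v = (if card (inc e) = 1 then 2 else 1)"
    unfolding deg_def S_def[symmetric] S_eq by simp
  then have "card (inc e) \<noteq> 1"
    using low by auto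
  then have two: "card (inc e) = 2"
    using g e(1) unfolding graph_def by blast
  have "excess inc Z \<le> excess inc (Z - {e})"
    using excess_Diff_pendant_edge[OF g S_eq[unfolded S_def]] .
  moreover have "Z - {e} \<noteq> {}"
  proof
    assume "Z - {e} = {}"
    then have "Z = {e}"
      using e(1) by blast
    then show False
      using excess_minimal_eq_0[OF g min] two by (simp add: excess_def)
  qed
  ultimately have "Z - {e} = Z"
    using minimal_nonneg_excessD(3)[OF min, of "Z - {e}"] excess_minimal_eq_0[OF g min] by simp
  then show False
    using e(1) by blast
qed

lemma connected_minimal:
  assumes g: "graph Z inc" and min: "minimal_nonneg_excess inc Z"
  shows "connected_edges inc Z"
proof -
  let ?P = "components Z inc"
  have "?P \<noteq> {}"
    using minimal_nonneg_excessD(1)[OF min] graph_edge(2)[OF g]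
    unfolding components_def verts_def by blast
  moreover have "(\<Sum>X\<in>?P. excess inc X) = 0"
    using excess_sum_components[OF g subset_refl] excess_minimal_eq_0[OF g min]
      components_subset[of _ Z inc] by (simp add: Int_absorb1)
  ultimately obtain X where X: "X \<in> ?P" "excess inc X \<ge> 0"
    using sum_strict_mono[OF finite_components[OF g], of "excess inc" "\<lambda>_. 0"]
    by (metis linorder_not_le sum.neutral_const order_less_irrefl)
  then have "X = Z"
    using minimal_nonneg_excessD(3)[OF min components_subset components_nonempty] by blast
  then show ?thesis
    using connected_components[OF X(1)] by simp
qed

lemma is_cycle_minimal:
  assumes g: "graph Z inc" and min: "minimal_nonneg_excess inc Z"
  shows "is_cycle inc Z"
proof -
  have sum_eq: "(\<Sum>v\<in>verts inc Z. 2) = (\<Sum>v\<in>verts inc Z. deg inc Z v)"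
    using sum_deg_eq_twice_card[OF g] excess_minimal_eq_0[OF g min] by (simp add: excess_def)
  have "2 = deg inc Z v" if "v \<in> verts inc Z" for v
    by (rule sum_mono_inv[OF sum_eq deg_minimal_ge_2[OF g min] that finite_verts[OF g]])
  then show ?thesis
    unfolding is_cycle_def using connected_minimal[OF g min] by simp
qed

lemma exists_cycle_if_excess_nonneg:
  assumes g: "graph Y inc" and "Y \<noteq> {}" "excess inc Y \<ge> 0"
  shows "\<exists>Z\<subseteq>Y. is_cycle inc Z"
  using ex_minimal_nonneg_excess[OF graph_finite[OF g] assms(2,3)]
    is_cycle_minimal graph_subset[OF g] by blast

lemma is_tree_iff_excess_neg:
  assumes g: "graph X inc" and conn: "connected_edges inc X"
  shows "is_tree inc X \<longleftrightarrow> excess inc X < 0"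
proof
  assume "is_tree inc X"
  then show "excess inc X < 0"
    using exists_cycle_if_excess_nonneg[OF g] conn
    unfolding is_tree_def connected_edges_def by force
next
  assume neg: "excess inc X < 0"
  have "excess inc Y \<le> excess inc X" "excess inc Y = 0" if "Y \<subseteq> X" "is_cycle inc Y" for Y
    using excess_le_connected[OF g conn that(1)] excess_cycle[OF graph_subset[OF g that(1)] that(2)]
      that(2) unfolding is_cycle_def connected_edges_def by blast+
  with neg conn show "is_tree inc X"
    unfolding is_tree_def by fastforce
qed

lemma excess_connected_ge:
  assumes g: "graph X inc" and conn: "connected_edges inc X"
  shows "excess inc X \<ge> -1"
proof -
  obtain e where e: "e \<in> X"
    using conn unfolding connected_edges_def by blast
  have "excess inc {e} \<le> excess inc X"
    using excess_le_connected[OF g conn] e by blast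
  then show ?thesis
    using graph_edge(3)[OF g e] by (simp add: excess_def)
qed
subsection \<open>Circuits of the \<open>k\<close>-circular matroid\<close>

lemma kc_family_iff: "C \<in> kc_family k E inc \<longleftrightarrow> C \<subseteq> E \<and> C \<noteq> {} \<and> excess inc C = int k"
  unfolding kc_family_def excess_def by auto

lemma ex_kc_circuit_iff:
  assumes "finite E"
  shows "(\<exists>C. kc_circuit k E inc C) \<longleftrightarrow> (\<exists>C\<subseteq>E. C \<noteq> {} \<and> excess inc C = int k)"
proof
  assume "\<exists>C. kc_circuit k E inc C"
  then show "\<exists>C\<subseteq>E. C \<noteq> {} \<and> excess inc C = int k"
    unfolding kc_circuit_def kc_family_iff by blast
next
  assume "\<exists>C\<subseteq>E. C \<noteq> {} \<and> excess inc C = int k"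
  then obtain C0 where "C0 \<in> kc_family k E inc"
    unfolding kc_family_iff by blast
  then obtain C where C: "C \<in> kc_family k E inc"
    and least: "\<And>D. D \<in> kc_family k E inc \<Longrightarrow> card C \<le> card D"
    using ex_has_least_nat[of "\<lambda>C. C \<in> kc_family k E inc" C0 card] by blast
  have "finite C"
    using C assms finite_subset unfolding kc_family_def by blast
  then have "kc_circuit k E inc C"
    unfolding kc_circuit_def using C least card_seteq by blast
  then show "\<exists>C. kc_circuit k E inc C"
    by blast
qed

lemma kc_indep_singleton:
  assumes g: "graph E inc" and "k \<ge> 1" "e \<in> E"
  shows "kc_indep k E inc {e}"
proof -
  have "{e} \<notin> kc_family k E inc"
    using graph_edge(4)[OF g \<open>e \<in> E\<close>] \<open>k \<ge> 1\<close> by (simp add: kc_family_def)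
  then have "\<not> kc_circuit k E inc C" if "C \<subseteq> {e}" for C
    using that unfolding kc_circuit_def kc_family_def by (auto simp: subset_singleton_iff)
  then show ?thesis
    unfolding kc_indep_def using \<open>e \<in> E\<close> by blast
qed

lemma ex_kc_circuit_iff_not_trivial:
  assumes g: "graph E inc" and "k \<ge> 1"
  shows "(\<exists>C. kc_circuit k E inc C) \<longleftrightarrow> \<not> kc_trivial k E inc"
proof
  assume "\<exists>C. kc_circuit k E inc C"
  then obtain C where C: "kc_circuit k E inc C"
    by blast
  then have CE: "C \<subseteq> E" "C \<noteq> {}"
    unfolding kc_circuit_def kc_family_def by auto
  then have "\<not> kc_base k E inc E"
    using C unfolding kc_base_def kc_indep_def by blast
  moreover have "\<not> kc_cobase k E inc E"
  proof
    assume "kc_cobase k E inc E"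
    then obtain B where B: "kc_base k E inc B" "E = E - B"
      unfolding kc_cobase_def by blast
    then have "B = {}"
      unfolding kc_base_def kc_indep_def by blast
    obtain e where e: "e \<in> E"
      using CE by blast
    then have "{e} = B"
      using B(1) \<open>B = {}\<close> kc_indep_singleton[OF g \<open>k \<ge> 1\<close> e] unfolding kc_base_def by blast
    then show False
      using \<open>B = {}\<close> by blast
  qed
  ultimately show "\<not> kc_trivial k E inc"
    unfolding kc_trivial_def by blast
next
  assume "\<not> kc_trivial k E inc"
  then have "\<not> kc_base k E inc E"
    unfolding kc_trivial_def by blast
  then show "\<exists>C. kc_circuit k E inc C"
    unfolding kc_base_def kc_indep_def by blast
qed

subsection \<open>The largest excess\<close>

lemma Delta_plus_card_tree_components:
  assumes g: "graph E inc"
  shows "Delta E inc + int (card (tree_components E inc))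
           = (\<Sum>X\<in>components E inc. max (excess inc X) 0)"
proof -
  let ?P = "components E inc"
  have gX: "graph X inc" "connected_edges inc X" if "X \<in> ?P" for X
    using graph_subset[OF g components_subset[OF that]] connected_components[OF that] by blast+
  have "Delta E inc = (\<Sum>X\<in>?P. excess inc X)"
    unfolding Delta_eq_excess excess_sum_components[OF g subset_refl]
    by (intro sum.cong refl) (simp add: Int_absorb1 components_subset)
  moreover have "tree_components E inc = {X\<in>?P. excess inc X < 0}"
    unfolding tree_components_def using is_tree_iff_excess_neg[OF gX(1) gX(2)] by auto
  then have "int (card (tree_components E inc)) = (\<Sum>X\<in>?P. if excess inc X < 0 then 1 else 0)"
    using finite_components[OF g] by (simp add: sum.inter_filter[symmetric])
  moreover have "excess inc X + (if excess inc X < 0 then 1 else 0) = max (excess inc X) 0"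
    if "X \<in> ?P" for X
    using excess_connected_ge[OF gX[OF that]] by auto
  ultimately show ?thesis
    by (simp add: sum.distrib[symmetric])
qed

lemma excess_le_sum_max:
  assumes g: "graph E inc" and C: "C \<subseteq> E"
  shows "excess inc C \<le> (\<Sum>X\<in>components E inc. max (excess inc X) 0)"
proof -
  have "excess inc (C \<inter> X) \<le> max (excess inc X) 0" if X: "X \<in> components E inc" for X
    using excess_le_connected[OF graph_subset[OF g components_subset[OF X]] connected_components[OF X],
        of "C \<inter> X"]
    by (cases "C \<inter> X = {}") auto
  then show ?thesis
    unfolding excess_sum_components[OF g C] by (rule sum_mono)
qed

lemma ex_subset_excess_eq_sum_max:
  assumes g: "graph E inc"
  shows "\<exists>C\<subseteq>E. excess inc C = (\<Sum>X\<in>components E inc. max (excess inc X) 0)"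
proof -
  let ?P = "components E inc"
  define C where "C = \<Union>{X\<in>?P. excess inc X \<ge> 0}"
  have CE: "C \<subseteq> E"
    unfolding C_def using components_subset by blast
  have "C \<inter> X = (if excess inc X \<ge> 0 then X else {})" if X: "X \<in> ?P" for X
  proof (cases "excess inc X \<ge> 0")
    case True
    then show ?thesis
      unfolding C_def using X by auto
  next
    case False
    have "X \<inter> Y = {}" if Y: "Y \<in> ?P" "excess inc Y \<ge> 0" for Y
    proof -
      have "X \<noteq> Y"
        using False Y(2) by auto
      then show ?thesis
        using disjoint_if_verts_disjoint[OF g components_subset[OF X]]
          verts_components_disjoint[OF X Y(1)] by blast
    qed
    then have "C \<inter> X = {}"
      unfolding C_def by blast
    then show ?thesis
      using False by simp
  qed
  then have "excess inc C = (\<Sum>X\<in>?P. max (excess inc X) 0)"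
    unfolding excess_sum_components[OF g CE] by (intro sum.cong refl) simp
  with CE show ?thesis
    by blast
qed

lemma ex_excess_eq_iff:
  assumes g: "graph E inc" and "k \<ge> 1"
  shows "(\<exists>C\<subseteq>E. C \<noteq> {} \<and> excess inc C = int k)
           \<longleftrightarrow> int k \<le> (\<Sum>X\<in>components E inc. max (excess inc X) 0)"
proof
  assume "\<exists>C\<subseteq>E. C \<noteq> {} \<and> excess inc C = int k"
  then obtain C where "C \<subseteq> E" "excess inc C = int k"
    by blast
  then show "int k \<le> (\<Sum>X\<in>components E inc. max (excess inc X) 0)"
    using excess_le_sum_max[OF g] by metis
next
  assume k_le: "int k \<le> (\<Sum>X\<in>components E inc. max (excess inc X) 0)"
  obtain C where C: "C \<subseteq> E" "excess inc C = (\<Sum>X\<in>components E inc. max (excess inc X) 0)"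
    using ex_subset_excess_eq_sum_max[OF g] by blast
  then obtain D where "D \<subseteq> C" "D \<noteq> {}" "excess inc D = int k"
    using exists_subset_excess_eq[OF graph_subset[OF g C(1)] _ \<open>k \<ge> 1\<close>] k_le by auto
  with C(1) show "\<exists>C\<subseteq>E. C \<noteq> {} \<and> excess inc C = int k"
    by blast
qed

theorem mainTheorem10:
  fixes E :: "'e set" and inc :: "'e \<Rightarrow> 'v set" and k :: nat
  assumes "graph E inc" and "k \<ge> 1"
  shows "((\<exists>C. kc_circuit k E inc C) \<longleftrightarrow>
            int k \<le> Delta E inc + int (card (tree_components E inc)))
       \<and> ((\<exists>C. kc_circuit k E inc C) \<longleftrightarrow> \<not> kc_trivial k E inc)"
  using ex_kc_circuit_iff[where k = k and inc = inc, OF graph_finite[OF assms(1)]] ex_excess_eq_iff[OF assms]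
    Delta_plus_card_tree_components[OF assms(1)] ex_kc_circuit_iff_not_trivial[OF assms]
  by simp

end
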